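(* An algebra $(S,\sqcup,\backslash)$ with two binary operations is functional (isomorphic to a set of partial functions closed under override and set-theoretic difference, with the operations so interpreted) if and only if it is an od-algebra.
   Context: For sets $X,Y$, $\mathrm{Par}(X,Y)$ is the set of partial functions from $X$ to $Y$, viewed as sets of ordered pairs. For $f,g\in\mathrm{Par}(X,Y)$, override is $f\sqcup g=f\cup(g-f)$, where $g-f$ is the restriction of $g$ to $X\setminus\mathrm{dom}(f)$; $f\backslash g=\{(x,y)\in f:(x,y)\notin g\}$. An algebra $(S,\sqcup,\backslash)$ is functional if it is isomorphic to $(A,\sqcup,\backslash)$ for some $A\subseteq\mathrm{Par}(X,Y)$ closed under $\sqcup$ and $\backslash$. An o-semilattice is an algebra $(L,\cap,\sqcup)$ such that $(L,\cap)$ is a semilattice and, with $x\leq y$ iff $x=x\cap y$, for all $x,y,z$: (i) $x\leq x\sqcup y$; (ii) $(x\cap y)\sqcup(y\cap z)\leq y$; (iii) $x\sqcup y\leq x\sqcup(y\cap(x\sqcup y))$; (iv) $x\cap z\leq(x\cap y)\sqcup z$. It is distributive if $(a\cap d)\sqcup((b\cap d)\cap(c\cap d))=((a\cap d)\sqcup(b\cap d))\cap((a\cap d)\sqcup(c\cap d))$ for all $a,b,c,d$. An ado-semilattice is a distributive o-semilattice in which $\sqcup$ is associative. An od-algebra is an algebra $(S,\sqcup,\backslash)$ such that, defining $a\cap b=a\backslash(a\backslash b)$, $(S,\sqcup,\cap)$ is an ado-semilattice, the element $(a\backslash b)\cap b$ is the same element (denoted $0$) for all $a,b\in S$, and $(a\backslash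 b)\sqcup(a\cap b)=a$ for all $a,b\in S$. *)

theory Defs
  imports Main
begin

definition Par :: "'x set \<Rightarrow> 'y set \<Rightarrow> ('x \<times> 'y) set set" where
  "Par X Y = {f. f \<subseteq> X \<times> Y \<and> (\<forall>x y z. (x, y) \<in> f \<longrightarrow> (x, z) \<in> f \<longrightarrow> y = z)}"

definition restr_minus :: "('x \<times> 'y) set \<Rightarrow> ('x \<times> 'y) set \<Rightarrow> ('x \<times> 'y) set" where
  "restr_minus g f = {(x, y). (x, y) \<in> g \<and> x \<notin> Domain f}"

definition override :: "('x \<times> 'y) set \<Rightarrow> ('x \<times> 'y) set \<Rightarrow> ('x \<times> 'y) set" where
  "override f g = f \<union> restr_minus g f"

definition pdiff :: "('x \<times> 'y) set \<Rightarrow> ('x \<times> 'y) set \<Rightarrow> ('x \<times> 'y) set" where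
  "pdiff f g = {(x, y). (x, y) \<in> f \<and> (x, y) \<notin> g}"

definition functional_in ::
  "'x itself \<Rightarrow> 'y itself \<Rightarrow> ('a \<Rightarrow> 'a \<Rightarrow> 'a) \<Rightarrow> ('a \<Rightarrow> 'a \<Rightarrow> 'a) \<Rightarrow> bool" where
  "functional_in _ _ j d \<longleftrightarrow>
    (\<exists>(X :: 'x set) (Y :: 'y set) A (h :: 'a \<Rightarrow> ('x \<times> 'y) set).
        A \<subseteq> Par X Y
      \<and> (\<forall>f\<in>A. \<forall>g\<in>A. override f g \<in> A \<and> pdiff f g \<in> A)
      \<and> bij_betw h UNIV A
      \<and> (\<forall>a b. h (j a b) = override (h a) (h b))
      \<and> (\<forall>a b. h (d a b) = pdiff (h a) (h b)))"

definition semilattice_op :: "('a \<Rightarrow> 'a \<Rightarrow> 'a) \<Rightarrow> bool" where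
  "semilattice_op m \<longleftrightarrow> (\<forall>x y z. m (m x y) z = m x (m y z))
     \<and> (\<forall>x y. m x y = m y x) \<and> (\<forall>x. m x x = x)"

definition o_semilattice :: "('a \<Rightarrow> 'a \<Rightarrow> 'a) \<Rightarrow> ('a \<Rightarrow> 'a \<Rightarrow> 'a) \<Rightarrow> bool" where
  "o_semilattice m j \<longleftrightarrow> semilattice_op m \<and>
    (let le = (\<lambda>x y. x = m x y) in
      (\<forall>x y. le x (j x y))
    \<and> (\<forall>x y z. le (j (m x y) (m y z)) y)
    \<and> (\<forall>x y. le (j x y) (j x (m y (j x y))))
    \<and> (\<forall>x y z. le (m x z) (j (m x y) z)))"

definition distributive_o :: "('a \<Rightarrow> 'a \<Rightarrow> 'a) \<Rightarrow> ('a \<Rightarrow> 'a \<Rightarrow> 'a) \<Rightarrow> bool" where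
  "distributive_o m j \<longleftrightarrow>
    (\<forall>a b c d. j (m a d) (m (m b d) (m c d)) = m (j (m a d) (m b d)) (j (m a d) (m c d)))"

definition ado_semilattice :: "('a \<Rightarrow> 'a \<Rightarrow> 'a) \<Rightarrow> ('a \<Rightarrow> 'a \<Rightarrow> 'a) \<Rightarrow> bool" where
  "ado_semilattice m j \<longleftrightarrow> o_semilattice m j \<and> distributive_o m j
     \<and> (\<forall>x y z. j (j x y) z = j x (j y z))"

definition od_meet :: "('a \<Rightarrow> 'a \<Rightarrow> 'a) \<Rightarrow> 'a \<Rightarrow> 'a \<Rightarrow> 'a" where
  "od_meet d a b = d a (d a b)"

definition od_algebra :: "('a \<Rightarrow> 'a \<Rightarrow> 'a) \<Rightarrow> ('a \<Rightarrow> 'a \<Rightarrow> 'a) \<Rightarrow> bool" where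
  "od_algebra j d \<longleftrightarrow> ado_semilattice (od_meet d) j
     \<and> (\<exists>z. \<forall>a b. od_meet d (d a b) b = z)
     \<and> (\<forall>a b. j (d a b) (od_meet d a b) = a)"

end

theory Submission
  imports Defs
begin

text \<open>Partial functions satisfy the od-algebra axioms for override, intersection
  \<open>f \<setminus> (f \<setminus> g) = f \<inter> g\<close> and difference, and an injective homomorphism reflects
  equations; this gives one direction.

  Conversely, in an od-algebra the elements below any \<open>c\<close> form a distributive lattice
  under \<open>\<sqinter>\<close> and \<open>\<squnion>\<close> in which \<open>c \<setminus> s\<close> is the complement of \<open>s\<close>. The points of the
  representation are prime filters \<open>V\<close> of \<open>(S, \<sqinter>)\<close>: an element \<open>s\<close> is defined at \<open>V\<close> if
  \<open>s \<in> V\<close> or overriding by \<open>s\<close> can lead out of \<open>V\<close>, and \<open>s\<close>, \<open>t\<close> take the same value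
  at \<open>V\<close> if \<open>s \<sqinter> t\<close> is defined there. Sending \<open>s\<close> to its graph turns \<open>\<squnion>\<close> into override
  and \<open>\<setminus>\<close> into difference. The map is injective because, when \<open>s \<setminus> t \<noteq> \<zero>\<close>, a prime
  filter containing \<open>s \<setminus> t\<close> (Zorn's lemma) is a point at which \<open>s\<close> is defined and
  \<open>t\<close> is not defined with the same value.\<close>

section \<open>Functional algebras are od-algebras\<close>

lemma pdiff_pdiff: "pdiff f (pdiff f g) = f \<inter> g"
  unfolding pdiff_def by auto

lemma od_algebra_if_embedding:
  fixes h :: "'a \<Rightarrow> ('x \<times> 'y) set" and j d :: "'a \<Rightarrow> 'a \<Rightarrow> 'a"
  assumes "inj h" and single_valued: "\<And>a. single_valued (h a)"
    and h_join: "\<And>a b. h (j a b) = override (h a) (h b)"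
    and h_diff: "\<And>a b. h (d a b) = pdiff (h a) (h b)"
  shows "od_algebra j d"
proof -
  have eqI: "a = b" if "h a = h b" for a b using \<open>inj h\<close> that by (rule injD)
  have h_meet: "h (od_meet d a b) = h a \<inter> h b" for a b
    unfolding od_meet_def h_diff pdiff_pdiff ..
  have sv: "y = y'" if "(x, y) \<in> h a" "(x, y') \<in> h a" for x y y' a
    using single_valued[of a] that unfolding single_valued_def by blast
  note simps = h_meet h_join h_diff override_def restr_minus_def pdiff_def
  have "semilattice_op (od_meet d)"
    unfolding semilattice_op_def by (intro conjI allI; rule eqI; auto simp: simps)
  moreover have "o_semilattice (od_meet d) j"
    unfolding o_semilattice_def Let_def
    by (intro conjI allI \<open>semilattice_op (od_meet d)\<close>; rule eqI; auto simp: simps dest: sv)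
  moreover have "distributive_o (od_meet d) j" "\<forall>x y w. j (j x y) w = j x (j y w)"
    unfolding distributive_o_def by (intro allI; rule eqI; auto simp: simps)+
  moreover have "\<forall>a b. od_meet d (d a b) b = d c c" for c
    by (intro allI, rule eqI) (auto simp: simps)
  moreover have "\<forall>a b. j (d a b) (od_meet d a b) = a"
    by (intro allI, rule eqI) (auto simp: simps dest: sv)
  ultimately show ?thesis unfolding od_algebra_def ado_semilattice_def by blast
qed

lemma od_algebra_if_functional:
  assumes "functional_in TYPE('x) TYPE('y) j d"
  shows "od_algebra j d"
proof -
  from assms obtain X :: "'x set" and Y :: "'y set" and A and h :: "'a \<Rightarrow> ('x \<times> 'y) set"
    where "A \<subseteq> Par X Y" "bij_betw h UNIV A"
      and "\<forall>a b. h (j a b) = override (h a) (h b)" "\<forall>a b. h (d a b) = pdiff (h a) (h b)"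
    unfolding functional_in_def by blast
  moreover from this have "single_valued (h a)" for a
    unfolding bij_betw_def Par_def single_valued_def by blast
  ultimately show ?thesis
    by (intro od_algebra_if_embedding[of h]) (auto simp: bij_betw_def)
qed

section \<open>Order structure of od-algebras\<close>

locale od_alg =
  fixes j :: "'a \<Rightarrow> 'a \<Rightarrow> 'a" (infixl "\<squnion>" 65)
    and d :: "'a \<Rightarrow> 'a \<Rightarrow> 'a" (infixl "\<setminus>" 66)
    and z :: 'a ("\<zero>")
  assumes od_algebra: "od_algebra (\<squnion>) (\<setminus>)"
    and diff_meet_right: "od_meet (\<setminus>) (a \<setminus> b) b = \<zero>"
begin

abbreviation meet (infixl "\<sqinter>" 70) where "a \<sqinter> b \<equiv> od_meet (\<setminus>) a b"

definition leq (infix "\<sqsubseteq>" 50) where "a \<sqsubseteq> b \<longleftrightarrow> a = a \<sqinter> b"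

lemma
  shows meet_semilattice: "semilattice_op (\<sqinter>)"
    and join_upper1: "x \<sqsubseteq> x \<squnion> y"
    and join_of_meets_le: "(x \<sqinter> y) \<squnion> (y \<sqinter> w) \<sqsubseteq> y"
    and join_le_join_meet: "x \<squnion> y \<sqsubseteq> x \<squnion> (y \<sqinter> (x \<squnion> y))"
    and meet_le_join_meet: "x \<sqinter> w \<sqsubseteq> (x \<sqinter> y) \<squnion> w"
    and join_meet_distrib_below:
      "(a \<sqinter> e) \<squnion> ((b \<sqinter> e) \<sqinter> (c \<sqinter> e)) = ((a \<sqinter> e) \<squnion> (b \<sqinter> e)) \<sqinter> ((a \<sqinter> e) \<squnion> (c \<sqinter> e))"
    and join_assoc: "(x \<squnion> y) \<squnion> w = x \<squnion> (y \<squnion> w)"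
    and diff_join_meet: "(a \<setminus> b) \<squnion> (a \<sqinter> b) = a"
  using od_algebra
  unfolding od_algebra_def ado_semilattice_def o_semilattice_def distributive_o_def Let_def leq_def
  by fast+

sublocale meet: semilattice_order "(\<sqinter>)" "(\<sqsubseteq>)" "\<lambda>a b. a \<sqsubseteq> b \<and> a \<noteq> b"
  by unfold_locales (use meet_semilattice in \<open>auto simp: semilattice_op_def leq_def\<close>)

declare meet.trans [trans]

text \<open>The join is commutative, and meet distributes over it, only on sets with a common
  upper bound \<open>c\<close>, which therefore appears as a hypothesis of many lemmas below.\<close>

lemma zero_least: "\<zero> \<sqsubseteq> a"
  by (metis diff_meet_right meet.cobounded2)

lemma le_zero_iff [simp]: "a \<sqsubseteq> \<zero> \<longleftrightarrow> a = \<zero>"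
  using meet.antisym zero_least by blast

lemma diff_le: "a \<setminus> b \<sqsubseteq> a"
  by (metis diff_join_meet join_upper1)

lemma meet_eq_zero_mono: "x \<sqsubseteq> y \<Longrightarrow> y \<sqinter> w = \<zero> \<Longrightarrow> x \<sqinter> w = \<zero>"
  using meet.mono[OF _ meet.refl, of x y w] by simp

lemma join_least: "p \<sqsubseteq> r \<Longrightarrow> q \<sqsubseteq> r \<Longrightarrow> p \<squnion> q \<sqsubseteq> r"
  using join_of_meets_le[of p r q] by (simp add: meet.absorb1 meet.absorb2)

lemma join_upper2: "p \<sqsubseteq> c \<Longrightarrow> q \<sqsubseteq> c \<Longrightarrow> q \<sqsubseteq> p \<squnion> q"
  using meet_le_join_meet[of c q p] by (simp add: meet.absorb2)

lemma join_commute: "p \<sqsubseteq> c \<Longrightarrow> q \<sqsubseteq> c \<Longrightarrow> p \<squnion> q = q \<squnion> p"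
  by (meson join_least join_upper1 join_upper2 meet.antisym)

lemma join_absorb2: "p \<sqsubseteq> q \<Longrightarrow> p \<squnion> q = q"
  by (meson join_least join_upper2 meet.antisym meet.refl)

lemma join_absorb1: "p \<sqsubseteq> q \<Longrightarrow> q \<squnion> p = q"
  using join_absorb2 join_commute meet.refl by metis

lemma join_zero [simp]: "\<zero> \<squnion> x = x" "x \<squnion> \<zero> = x"
  by (simp_all add: join_absorb1 join_absorb2 zero_least)

lemma meet_le_join_if_le: "x \<sqsubseteq> y \<Longrightarrow> y \<sqinter> w \<sqsubseteq> x \<squnion> w"
  using meet_le_join_meet[of y w x] by (simp add: meet.absorb2)

lemma join_meet_join: "x \<squnion> (y \<sqinter> (x \<squnion> y)) = x \<squnion> y"
  by (simp add: join_le_join_meet join_least join_upper1 meet.antisym)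

lemma join_meet_distrib:
  "a \<sqsubseteq> c \<Longrightarrow> x \<sqsubseteq> c \<Longrightarrow> y \<sqsubseteq> c \<Longrightarrow> a \<squnion> (x \<sqinter> y) = (a \<squnion> x) \<sqinter> (a \<squnion> y)"
  using join_meet_distrib_below[of a c x y] by (simp add: meet.absorb1)

lemma meet_join_distrib:
  assumes "a \<sqsubseteq> c" "x \<sqsubseteq> c" "y \<sqsubseteq> c"
  shows "a \<sqinter> (x \<squnion> y) = (a \<sqinter> x) \<squnion> (a \<sqinter> y)"
proof -
  have "a \<sqinter> x \<sqsubseteq> c" using assms(1) by (rule meet.coboundedI1)
  then have "(a \<sqinter> x) \<squnion> (a \<sqinter> y) = ((a \<sqinter> x) \<squnion> a) \<sqinter> (y \<squnion> (a \<sqinter> x))"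
    using assms by (simp add: join_meet_distrib join_commute[of "a \<sqinter> x" c y])
  also have "\<dots> = a \<sqinter> ((y \<squnion> a) \<sqinter> (y \<squnion> x))"
    using assms by (simp add: join_absorb2 join_meet_distrib)
  also have "\<dots> = a \<sqinter> (x \<squnion> y)"
    using assms join_upper2[of y c a] join_commute[of y c x]
    by (simp add: meet.absorb1 flip: meet.assoc)
  finally show ?thesis ..
qed

lemma diff_join_cancel: "s \<sqsubseteq> c \<Longrightarrow> (c \<setminus> s) \<squnion> s = c"
  using diff_join_meet[of c s] by (simp add: meet.absorb2)

lemma join_diff_cancel: "s \<sqsubseteq> c \<Longrightarrow> s \<squnion> (c \<setminus> s) = c"
  using diff_join_cancel join_commute diff_le by metis

lemma diff_le_if_join_eq:
  assumes "s \<sqsubseteq> c" "y \<sqsubseteq> c" "s \<squnion> y = c"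
  shows "c \<setminus> s \<sqsubseteq> y"
proof -
  have "c \<setminus> s = (c \<setminus> s) \<sqinter> (s \<squnion> y)"
    using diff_le assms(3) by (simp add: meet.absorb1)
  also have "\<dots> = (c \<setminus> s) \<sqinter> y"
    using meet_join_distrib[OF diff_le assms(1,2)] by (simp add: diff_meet_right)
  finally show ?thesis by (simp add: leq_def)
qed

lemma join_diff_le: "(x \<squnion> y) \<setminus> x \<sqsubseteq> y"
  using diff_le_if_join_eq[OF join_upper1 meet.cobounded2 join_meet_join] by simp

lemma join_mono_right:
  assumes "y \<sqsubseteq> y'"
  shows "x \<squnion> y \<sqsubseteq> x \<squnion> y'"
proof -
  have "(x \<squnion> y) \<setminus> x \<sqsubseteq> (x \<squnion> y) \<sqinter> y'"
    using meet.trans[OF join_diff_le assms] diff_le by simp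
  also have "\<dots> \<sqsubseteq> x \<squnion> y'"
    by (rule meet_le_join_if_le[OF join_upper1])
  finally have "x \<squnion> ((x \<squnion> y) \<setminus> x) \<sqsubseteq> x \<squnion> y'"
    by (rule join_least[OF join_upper1])
  then show ?thesis by (simp add: join_diff_cancel join_upper1)
qed

lemma eq_zero_if_disjoint_join:
  assumes "u \<sqsubseteq> a \<squnion> b" "u \<sqinter> a = \<zero>" "u \<sqinter> b = \<zero>"
  shows "u = \<zero>"
proof -
  have "u \<sqinter> (b \<sqinter> (a \<squnion> b)) = \<zero>"
    using meet_eq_zero_mono[OF meet.cobounded1] assms(3) by (metis meet.commute)
  moreover have "u = u \<sqinter> (a \<squnion> (b \<sqinter> (a \<squnion> b)))"
    using assms(1) by (simp add: join_meet_join meet.absorb1)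
  ultimately show ?thesis
    using meet_join_distrib[OF assms(1) join_upper1 meet.cobounded2] assms(2) by simp
qed

lemma le_if_diff_eq_zero: "s \<setminus> t = \<zero> \<Longrightarrow> s \<sqsubseteq> t"
  using diff_join_meet[of s t] by (metis join_zero(1) leq_def)

lemma eq_if_diffs_eq_zero: "s \<setminus> t = \<zero> \<Longrightarrow> t \<setminus> s = \<zero> \<Longrightarrow> s = t"
  using le_if_diff_eq_zero meet.antisym by blast

text \<open>For partial functions, \<open>(t \<squnion> c) \<setminus> t\<close> is \<open>c\<close> restricted to the complement
  of the domain of \<open>t\<close>, so \<open>c \<setminus> ((t \<squnion> c) \<setminus> t)\<close> is \<open>c\<close> restricted to the domain of \<open>t\<close>.\<close>

lemma join_restrict_to_dom: "t \<squnion> (c \<setminus> ((t \<squnion> c) \<setminus> t)) = t"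
proof -
  define c' where "c' = (t \<squnion> c) \<setminus> t"
  define r where "r = c \<setminus> c'"
  define w where "w = (t \<squnion> r) \<setminus> t"
  have c'_le: "c' \<sqsubseteq> c" "c' \<sqsubseteq> t \<squnion> c'"
    unfolding c'_def using join_diff_le diff_le join_diff_cancel[OF join_upper1] by simp_all
  have "(t \<squnion> r) \<squnion> c' = t \<squnion> c'"
    unfolding r_def using join_assoc diff_join_cancel[OF c'_le(1)]
    by (simp add: c'_def join_diff_cancel join_upper1)
  then have "w \<sqsubseteq> t \<squnion> c'"
    unfolding w_def by (metis diff_le join_upper1 meet.trans)
  then have "w = (w \<sqinter> t) \<squnion> (w \<sqinter> c')"
    using meet_join_distrib[OF _ join_upper1 c'_le(2)] by (simp add: meet.absorb1)
  also have "w \<sqinter> t = \<zero>"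
    unfolding w_def by (rule diff_meet_right)
  finally have "w \<sqsubseteq> c'" by (simp add: leq_def)
  moreover have "w \<sqsubseteq> r" unfolding w_def by (rule join_diff_le)
  ultimately have "w \<sqsubseteq> r \<sqinter> c'" by simp
  then have "w = \<zero>" unfolding r_def by (simp add: diff_meet_right)
  then have "t \<squnion> r = t"
    using join_diff_cancel[OF join_upper1, of t r] unfolding w_def by simp
  then show ?thesis unfolding r_def c'_def .
qed

lemma eq_zero_if_absorbed_by_disjoint:
  assumes "p \<squnion> t = p" "q \<squnion> t = q" "p \<sqinter> q = \<zero>" "p \<sqsubseteq> c" "q \<sqsubseteq> c"
  shows "t = \<zero>"
proof -
  define b where "b = p \<squnion> q"
  define r where "r = b \<setminus> ((t \<squnion> b) \<setminus> t)"
  have p_le: "p \<sqsubseteq> b" and q_le: "q \<sqsubseteq> b" and r_le: "r \<sqsubseteq> b"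
    unfolding b_def r_def using join_upper1 join_upper2[OF assms(4,5)] diff_le by simp_all
  have t_r: "t \<squnion> r = t" unfolding r_def by (rule join_restrict_to_dom)
  have "r \<sqsubseteq> p"
    using join_upper2[OF p_le r_le] join_assoc[of p t r] by (simp add: t_r assms(1))
  moreover have "r \<sqsubseteq> q"
    using join_upper2[OF q_le r_le] join_assoc[of q t r] by (simp add: t_r assms(2))
  ultimately have "r = \<zero>" using assms(3) by (metis le_zero_iff meet.boundedI)
  then have "b \<sqsubseteq> (t \<squnion> b) \<setminus> t"
    using diff_join_meet[of b "(t \<squnion> b) \<setminus> t"] unfolding r_def by (simp add: leq_def)
  then have "b \<sqinter> t = \<zero>" by (rule meet_eq_zero_mono) (rule diff_meet_right)
  moreover have "t \<sqsubseteq> b"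
    using join_upper2[OF meet.trans[OF \<open>b \<sqsubseteq> _\<close> diff_le] join_upper1]
    by (simp add: b_def join_assoc assms(2))
  ultimately show ?thesis by (simp add: meet.absorb2)
qed

lemma join_eq_left_if_disjoint:
  assumes "t \<sqsubseteq> v" "t \<sqinter> (x \<squnion> v) = \<zero>"
  shows "x \<squnion> t = x"
proof -
  have "(x \<squnion> t) \<setminus> x \<sqsubseteq> (x \<squnion> t) \<sqinter> t"
    by (simp add: diff_le join_diff_le)
  also have "\<dots> \<sqsubseteq> t \<sqinter> (x \<squnion> v)"
    using join_mono_right[OF assms(1)] by (simp add: meet.coboundedI1)
  finally have "(x \<squnion> t) \<setminus> x = \<zero>" using assms(2) by simp
  then show ?thesis
    using join_diff_cancel[OF join_upper1, of x t] by simp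
qed

lemma diff_meet_diff: "(a \<setminus> b) \<sqinter> (b \<setminus> a) = \<zero>"
proof -
  have "b \<sqinter> (a \<setminus> b) = \<zero>" using diff_meet_right by (simp add: meet.commute)
  then show ?thesis using meet_eq_zero_mono[OF diff_le] by (simp add: meet.commute)
qed

lemma diff_meet_meet: "(a \<setminus> b) \<sqinter> (a \<sqinter> b) = \<zero>"
proof -
  have "b \<sqinter> (a \<setminus> b) = \<zero>" using diff_meet_right by (simp add: meet.commute)
  then have "(a \<sqinter> b) \<sqinter> (a \<setminus> b) = \<zero>" by (rule meet_eq_zero_mono[OF meet.cobounded2])
  then show ?thesis by (simp add: meet.commute)
qed

section \<open>Prime filters\<close>

definition proper_filter :: "'a set \<Rightarrow> bool" where
  "proper_filter F \<longleftrightarrow> (\<forall>a b. a \<in> F \<longrightarrow> a \<sqsubseteq> b \<longrightarrow> b \<in> F) \<and> (\<forall>a\<in>F. \<forall>b\<in>F. a \<sqinter> b \<in> F) \<and> \<zero> \<notin> F"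

definition prime_filter :: "'a set \<Rightarrow> bool" where
  "prime_filter V \<longleftrightarrow> proper_filter V \<and> V \<noteq> {} \<and> (\<forall>a b. a \<squnion> b \<in> V \<longrightarrow> a \<in> V \<or> b \<in> V)"

lemma maximal_proper_filter_exists:
  assumes "a \<noteq> \<zero>"
  shows "\<exists>M. proper_filter M \<and> a \<in> M \<and> (\<forall>F. proper_filter F \<longrightarrow> M \<subseteq> F \<longrightarrow> F = M)"
proof -
  let ?A = "{F. proper_filter F \<and> a \<in> F}"
  have "{b. a \<sqsubseteq> b} \<in> ?A"
    using assms by (auto simp: proper_filter_def intro: meet.trans meet.refl)
  moreover have "\<Union>C \<in> ?A" if "C \<noteq> {}" "subset.chain ?A C" for C
  proof -
    have "x \<sqinter> y \<in> \<Union>C" if "x \<in> \<Union>C" "y \<in> \<Union>C" for x y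
    proof -
      obtain X Y where XY: "X \<in> C" "Y \<in> C" "x \<in> X" "y \<in> Y"
        using \<open>x \<in> \<Union>C\<close> \<open>y \<in> \<Union>C\<close> by blast
      have "C \<subseteq> ?A" "X \<subseteq> Y \<or> Y \<subseteq> X"
        using \<open>subset.chain ?A C\<close> XY(1,2) by (auto simp: subset.chain_def)
      then have "\<exists>Z\<in>C. x \<in> Z \<and> y \<in> Z \<and> proper_filter Z" using XY by blast
      then show ?thesis unfolding proper_filter_def by blast
    qed
    moreover have "C \<subseteq> ?A" using \<open>subset.chain ?A C\<close> by (simp add: subset.chain_def)
    ultimately show ?thesis using \<open>C \<noteq> {}\<close> unfolding proper_filter_def by blast
  qed
  ultimately obtain M where "M \<in> ?A" and "\<forall>F\<in>?A. M \<subseteq> F \<longrightarrow> F = M"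
    using subset_Zorn_nonempty[of ?A] by blast
  then show ?thesis by blast
qed

lemma meet_eq_zero_if_not_mem_maximal:
  assumes "proper_filter M" "\<forall>F. proper_filter F \<longrightarrow> M \<subseteq> F \<longrightarrow> F = M" "M \<noteq> {}" "x \<notin> M"
  shows "\<exists>m\<in>M. m \<sqinter> x = \<zero>"
proof (rule ccontr)
  assume no_zero: "\<not> (\<exists>m\<in>M. m \<sqinter> x = \<zero>)"
  define F where "F = {b. \<exists>m\<in>M. m \<sqinter> x \<sqsubseteq> b}"
  have "proper_filter F"
    unfolding proper_filter_def
  proof (intro conjI allI impI ballI)
    show "b \<in> F" if "a \<in> F" "a \<sqsubseteq> b" for a b
      using that unfolding F_def by (blast intro: meet.trans)
    show "a \<sqinter> b \<in> F" if a: "a \<in> F" and b: "b \<in> F" for a b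
    proof -
      obtain m m' where "m \<in> M" "m \<sqinter> x \<sqsubseteq> a" "m' \<in> M" "m' \<sqinter> x \<sqsubseteq> b"
        using a b unfolding F_def by blast
      then have "(m \<sqinter> m') \<sqinter> x \<sqsubseteq> a" "(m \<sqinter> m') \<sqinter> x \<sqsubseteq> b"
        using meet.trans[OF meet.mono[OF meet.cobounded1 meet.refl]]
          meet.trans[OF meet.mono[OF meet.cobounded2 meet.refl]] by blast+
      moreover have "m \<sqinter> m' \<in> M"
        using assms(1) \<open>m \<in> M\<close> \<open>m' \<in> M\<close> unfolding proper_filter_def by blast
      ultimately show ?thesis unfolding F_def by auto
    qed
    show "\<zero> \<notin> F" using no_zero unfolding F_def by simp
  qed
  moreover have "M \<subseteq> F" "x \<in> F"
    using \<open>M \<noteq> {}\<close> meet.cobounded1 meet.cobounded2 unfolding F_def by blast+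
  ultimately show False using assms(2,4) by blast
qed

lemma prime_filter_exists:
  assumes "a \<noteq> \<zero>"
  shows "\<exists>V. prime_filter V \<and> a \<in> V"
proof -
  obtain M where M: "proper_filter M" "a \<in> M" and max: "\<forall>F. proper_filter F \<longrightarrow> M \<subseteq> F \<longrightarrow> F = M"
    using maximal_proper_filter_exists[OF assms] by blast
  have "x \<in> M \<or> y \<in> M" if "x \<squnion> y \<in> M" for x y
  proof (rule ccontr)
    assume "\<not> (x \<in> M \<or> y \<in> M)"
    then obtain m m' where "m \<in> M" "m \<sqinter> x = \<zero>" "m' \<in> M" "m' \<sqinter> y = \<zero>"
      using meet_eq_zero_if_not_mem_maximal[OF M(1) max] M(2) by blast
    moreover define u where "u = (m \<sqinter> m') \<sqinter> (x \<squnion> y)"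
    ultimately have "u \<sqinter> x = \<zero>" "u \<sqinter> y = \<zero>"
      using meet_eq_zero_mono meet.coboundedI1 meet.cobounded1 meet.cobounded2 by metis+
    then have "u = \<zero>"
      using eq_zero_if_disjoint_join[OF _ \<open>u \<sqinter> x = \<zero>\<close> \<open>u \<sqinter> y = \<zero>\<close>] u_def by simp
    moreover have "u \<in> M"
      using M(1) \<open>m \<in> M\<close> \<open>m' \<in> M\<close> \<open>x \<squnion> y \<in> M\<close> unfolding u_def proper_filter_def by blast
    ultimately show False using M(1) unfolding proper_filter_def by simp
  qed
  then show ?thesis using M unfolding prime_filter_def by blast
qed

text \<open>A prime filter \<open>V\<close> is a point of the representation. Values are equivalence classes, and \<open>code\<close> picks a representative
  so that values can be taken in the carrier itself.\<close>

definition transparent :: "'a set \<Rightarrow> 'a \<Rightarrow> bool" where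
  "transparent V a \<longleftrightarrow> (\<forall>v\<in>V. a \<squnion> v \<in> V)"

definition dom_at :: "'a set \<Rightarrow> 'a set" where
  "dom_at V = {a. a \<in> V \<or> \<not> transparent V a}"

definition value_at :: "'a set \<Rightarrow> 'a \<Rightarrow> 'a set" where
  "value_at V s = {t. s \<sqinter> t \<in> dom_at V}"

definition code :: "'a set \<Rightarrow> 'a \<Rightarrow> 'a" where
  "code V s = (SOME t. t \<in> value_at V s)"

context
  fixes V assumes V: "prime_filter V"
begin

lemma
  shows filter_up: "a \<in> V \<Longrightarrow> a \<sqsubseteq> b \<Longrightarrow> b \<in> V"
    and filter_meet: "a \<in> V \<Longrightarrow> b \<in> V \<Longrightarrow> a \<sqinter> b \<in> V"
    and zero_notin_filter: "\<zero> \<notin> V"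
    and filter_prime: "a \<squnion> b \<in> V \<Longrightarrow> a \<in> V \<or> b \<in> V"
    and filter_nonempty: "\<exists>v. v \<in> V"
  using V unfolding prime_filter_def proper_filter_def by blast+

lemma transparent_if_join_mem:
  assumes "v \<in> V" "a \<squnion> v \<in> V"
  shows "transparent V a"
  unfolding transparent_def
proof
  fix w assume "w \<in> V"
  then have "(a \<squnion> v) \<sqinter> w \<in> V" using assms filter_meet by blast
  then show "a \<squnion> w \<in> V" by (rule filter_up) (rule meet_le_join_if_le[OF join_upper1])
qed

lemma transparent_join: "transparent V a \<Longrightarrow> transparent V b \<Longrightarrow> transparent V (a \<squnion> b)"
  using filter_nonempty transparent_if_join_mem join_assoc unfolding transparent_def by metis

lemma transparent_le:
  assumes "a \<sqsubseteq> b" "transparent V b"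
  shows "transparent V a"
proof -
  obtain v where "v \<in> V" using filter_nonempty by blast
  then have "(b \<squnion> v) \<sqinter> v \<in> V" using assms(2) filter_meet unfolding transparent_def by blast
  moreover have "(b \<squnion> v) \<sqinter> v \<sqsubseteq> a \<squnion> v"
    by (rule meet_le_join_if_le) (rule meet.trans[OF assms(1) join_upper1])
  ultimately show ?thesis using \<open>v \<in> V\<close> filter_up transparent_if_join_mem by blast
qed

lemma transparent_join_right:
  assumes "transparent V (a \<squnion> b)" "a \<notin> V"
  shows "transparent V b"
proof -
  obtain v where "v \<in> V" using filter_nonempty by blast
  then have "a \<squnion> (b \<squnion> v) \<in> V" using assms(1) join_assoc unfolding transparent_def by metis
  then show ?thesis using assms(2) \<open>v \<in> V\<close> filter_prime transparent_if_join_mem by blast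
qed

lemma mem_dom_at: "a \<in> V \<Longrightarrow> a \<in> dom_at V"
  unfolding dom_at_def by blast

lemma dom_at_up: "a \<in> dom_at V \<Longrightarrow> a \<sqsubseteq> b \<Longrightarrow> b \<in> dom_at V"
  unfolding dom_at_def using filter_up transparent_le by blast

lemma zero_notin_dom_at: "\<zero> \<notin> dom_at V"
  unfolding dom_at_def
  using filter_nonempty transparent_if_join_mem zero_notin_filter by fastforce

lemma join_mem_dom_at_iff: "a \<squnion> b \<in> dom_at V \<longleftrightarrow> a \<in> dom_at V \<or> b \<in> dom_at V"
proof -
  have "a \<squnion> b \<in> V" if "transparent V a" "b \<in> V"
    using that unfolding transparent_def by blast
  moreover have "a \<squnion> b \<in> V" if "a \<in> V" using that filter_up join_upper1 by blast
  ultimately show ?thesis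
    unfolding dom_at_def
    using filter_prime transparent_join transparent_join_right transparent_le[OF join_upper1]
    by blast
qed

lemma mem_if_compatible_mem:
  assumes "x \<sqsubseteq> c" "y \<sqsubseteq> c" "x \<in> V" "y \<in> dom_at V"
  shows "y \<in> V"
proof -
  have "y \<squnion> x \<in> V" using filter_up[OF assms(3) join_upper2[OF assms(2,1)]] .
  then show ?thesis using assms(3,4) transparent_if_join_mem unfolding dom_at_def by blast
qed

lemma diff_join_mem:
  assumes "v \<in> V" "x \<squnion> v \<notin> V"
  shows "v \<setminus> (x \<squnion> v) \<in> V"
proof -
  have "v \<sqinter> (x \<squnion> v) \<notin> V" using assms(2) filter_up meet.cobounded2 by blast
  then show ?thesis using diff_join_meet assms(1) filter_prime by metis
qed

lemma transparent_if_disjoint: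
  assumes "p \<sqsubseteq> c" "q \<sqsubseteq> c" "p \<sqinter> q = \<zero>" "\<not> transparent V p"
  shows "transparent V q"
proof (rule ccontr)
  assume "\<not> transparent V q"
  obtain v where "v \<in> V" using filter_nonempty by blast
  then have "p \<squnion> v \<notin> V" "q \<squnion> v \<notin> V"
    using assms(4) \<open>\<not> transparent V q\<close> transparent_if_join_mem by blast+
  define t where "t = (v \<setminus> (p \<squnion> v)) \<sqinter> (v \<setminus> (q \<squnion> v))"
  have "t \<in> V" unfolding t_def using diff_join_mem \<open>v \<in> V\<close> \<open>p \<squnion> v \<notin> V\<close> \<open>q \<squnion> v \<notin> V\<close> filter_meet by blast
  have "t \<sqsubseteq> v" unfolding t_def by (simp add: diff_le meet.coboundedI1)
  have "p \<squnion> t = p"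
    using meet_eq_zero_mono[OF meet.cobounded1 diff_meet_right] \<open>t \<sqsubseteq> v\<close>
    by (intro join_eq_left_if_disjoint) (auto simp: t_def)
  moreover have "q \<squnion> t = q"
    using meet_eq_zero_mono[OF meet.cobounded2 diff_meet_right] \<open>t \<sqsubseteq> v\<close>
    by (intro join_eq_left_if_disjoint) (auto simp: t_def)
  ultimately have "t = \<zero>" using eq_zero_if_absorbed_by_disjoint assms(1-3) by blast
  then show False using \<open>t \<in> V\<close> zero_notin_filter by simp
qed

lemma meet_mem_dom_at:
  assumes "a \<sqsubseteq> c" "b \<sqsubseteq> c" "a \<in> dom_at V" "b \<in> dom_at V"
  shows "a \<sqinter> b \<in> dom_at V"
proof (cases "a \<in> V \<or> b \<in> V")
  case True
  then have "a \<in> V" "b \<in> V" using mem_if_compatible_mem assms by blast+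
  then show ?thesis using filter_meet mem_dom_at by blast
next
  case False
  then have opaque: "\<not> transparent V a" "\<not> transparent V b" using assms(3,4) unfolding dom_at_def by blast+
  show ?thesis
  proof (rule ccontr)
    assume "a \<sqinter> b \<notin> dom_at V"
    then have "transparent V (a \<sqinter> b)" unfolding dom_at_def by blast
    then have "\<not> transparent V (a \<setminus> b)" "\<not> transparent V (b \<setminus> a)"
      using opaque transparent_join diff_join_meet[of a b] diff_join_meet[of b a] meet.commute
      by metis+
    moreover have "a \<setminus> b \<sqsubseteq> c" "b \<setminus> a \<sqsubseteq> c"
      using assms(1,2) diff_le meet.trans by blast+
    ultimately show False using transparent_if_disjoint diff_meet_diff by blast
  qed
qed

lemma value_at_eq_if_meet_mem:
  assumes "s \<sqinter> t \<in> dom_at V"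
  shows "value_at V s = value_at V t"
proof -
  have swap: "b \<sqinter> w \<in> dom_at V" if "a \<sqinter> b \<in> dom_at V" "a \<sqinter> w \<in> dom_at V" for a b w
  proof -
    have "(a \<sqinter> b) \<sqinter> (a \<sqinter> w) \<in> dom_at V"
      by (rule meet_mem_dom_at[OF meet.cobounded1 meet.cobounded1 that])
    then show ?thesis by (rule dom_at_up) (rule meet.mono[OF meet.cobounded2 meet.cobounded2])
  qed
  have "t \<sqinter> s \<in> dom_at V" using assms by (simp add: meet.commute)
  then show ?thesis using swap assms unfolding value_at_def by blast
qed

lemma code_eq_iff:
  assumes "s \<in> dom_at V" "t \<in> dom_at V"
  shows "code V s = code V t \<longleftrightarrow> value_at V s = value_at V t"
proof
  have "value_at V (code V x) = value_at V x" if "x \<in> dom_at V" for x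
  proof -
    have "code V x \<in> value_at V x"
      unfolding code_def by (rule someI[of _ x]) (simp add: value_at_def that)
    then have "x \<sqinter> code V x \<in> dom_at V" by (simp add: value_at_def)
    then show ?thesis by (rule value_at_eq_if_meet_mem[symmetric])
  qed
  then show "code V s = code V t \<Longrightarrow> value_at V s = value_at V t" using assms by metis
  show "value_at V s = value_at V t \<Longrightarrow> code V s = code V t" unfolding code_def by simp
qed

lemma code_join_if_mem:
  assumes "s \<in> dom_at V"
  shows "code V (s \<squnion> t) = code V s"
proof -
  have "(s \<squnion> t) \<sqinter> x \<in> dom_at V \<longleftrightarrow> s \<sqinter> x \<in> dom_at V" for x
  proof
    assume "(s \<squnion> t) \<sqinter> x \<in> dom_at V"
    then have "s \<sqinter> ((s \<squnion> t) \<sqinter> x) \<in> dom_at V"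
      by (rule meet_mem_dom_at[OF join_upper1 meet.cobounded1 assms])
    then show "s \<sqinter> x \<in> dom_at V"
      by (rule dom_at_up) (rule meet.mono[OF meet.refl meet.cobounded2])
  next
    assume "s \<sqinter> x \<in> dom_at V"
    then show "(s \<squnion> t) \<sqinter> x \<in> dom_at V"
      by (rule dom_at_up) (rule meet.mono[OF join_upper1 meet.refl])
  qed
  then show ?thesis unfolding code_def value_at_def by simp
qed

lemma code_join_if_not_mem:
  assumes "s \<notin> dom_at V"
  shows "code V (s \<squnion> t) = code V t"
proof -
  have "(s \<squnion> t) \<sqinter> x \<in> dom_at V \<longleftrightarrow> t \<sqinter> x \<in> dom_at V" for x
  proof
    let ?c = "s \<squnion> t"
    assume "?c \<sqinter> x \<in> dom_at V"
    have "?c \<sqinter> x = (?c \<sqinter> x) \<sqinter> (s \<squnion> (?c \<setminus> s))"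
      by (simp add: join_diff_cancel join_upper1 meet.absorb1)
    also have "\<dots> = ((?c \<sqinter> x) \<sqinter> s) \<squnion> ((?c \<sqinter> x) \<sqinter> (?c \<setminus> s))"
      by (rule meet_join_distrib[OF meet.cobounded1 join_upper1 diff_le])
    finally have "(?c \<sqinter> x) \<sqinter> s \<in> dom_at V \<or> (?c \<sqinter> x) \<sqinter> (?c \<setminus> s) \<in> dom_at V"
      using \<open>?c \<sqinter> x \<in> dom_at V\<close> join_mem_dom_at_iff by metis
    moreover have "(?c \<sqinter> x) \<sqinter> s \<notin> dom_at V"
      using assms dom_at_up meet.cobounded2 by blast
    ultimately have "(?c \<sqinter> x) \<sqinter> (?c \<setminus> s) \<in> dom_at V" by blast
    then show "t \<sqinter> x \<in> dom_at V"
      by (rule dom_at_up) (simp add: join_diff_le meet.coboundedI1 meet.coboundedI2)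
  next
    assume "t \<sqinter> x \<in> dom_at V"
    define e where "e = (s \<squnion> (t \<sqinter> x)) \<setminus> s"
    have "s \<squnion> e = s \<squnion> (t \<sqinter> x)" unfolding e_def by (rule join_diff_cancel[OF join_upper1])
    then have "e \<in> dom_at V" using join_mem_dom_at_iff assms \<open>t \<sqinter> x \<in> dom_at V\<close> by metis
    moreover have "e \<sqsubseteq> (s \<squnion> t) \<sqinter> x"
      unfolding e_def using meet.trans[OF diff_le join_mono_right[OF meet.cobounded1]]
        meet.trans[OF join_diff_le meet.cobounded2] by simp
    ultimately show "(s \<squnion> t) \<sqinter> x \<in> dom_at V" by (rule dom_at_up)
  qed
  then show ?thesis unfolding code_def value_at_def by simp
qed

lemma diff_mem_dom_at_iff:
  "s \<setminus> t \<in> dom_at V \<longleftrightarrow> s \<in> dom_at V \<and> \<not> (t \<in> dom_at V \<and> code V t = code V s)"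
proof -
  have meet_iff: "s \<sqinter> t \<in> dom_at V \<longleftrightarrow> s \<in> dom_at V \<and> t \<in> dom_at V \<and> code V t = code V s"
  proof
    assume "s \<sqinter> t \<in> dom_at V"
    then have "s \<in> dom_at V" "t \<in> dom_at V" "value_at V s = value_at V t"
      using dom_at_up meet.cobounded1 meet.cobounded2 value_at_eq_if_meet_mem by blast+
    then show "s \<in> dom_at V \<and> t \<in> dom_at V \<and> code V t = code V s"
      unfolding code_def by simp
  next
    assume h: "s \<in> dom_at V \<and> t \<in> dom_at V \<and> code V t = code V s"
    then have "value_at V t = value_at V s" using code_eq_iff by blast
    moreover have "s \<in> value_at V s" using h by (simp add: value_at_def)
    ultimately have "s \<in> value_at V t" by simp
    then show "s \<sqinter> t \<in> dom_at V" by (simp add: value_at_def meet.commute)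
  qed
  have "\<not> (s \<setminus> t \<in> dom_at V \<and> s \<sqinter> t \<in> dom_at V)"
  proof
    assume "s \<setminus> t \<in> dom_at V \<and> s \<sqinter> t \<in> dom_at V"
    then have "(s \<setminus> t) \<sqinter> (s \<sqinter> t) \<in> dom_at V"
      using meet_mem_dom_at[OF diff_le meet.cobounded1] by blast
    then show False using diff_meet_meet zero_notin_dom_at by simp
  qed
  moreover have "s \<in> dom_at V \<longleftrightarrow> s \<setminus> t \<in> dom_at V \<or> s \<sqinter> t \<in> dom_at V"
    using join_mem_dom_at_iff[of "s \<setminus> t" "s \<sqinter> t"] by (simp add: diff_join_meet)
  ultimately show ?thesis using meet_iff by blast
qed

lemma code_diff:
  assumes "s \<setminus> t \<in> dom_at V"
  shows "code V (s \<setminus> t) = code V s"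
  using value_at_eq_if_meet_mem[of s "s \<setminus> t"] assms meet.absorb2[OF diff_le]
  unfolding code_def by simp

end

section \<open>The representation\<close>

text \<open>The point indexed by \<open>(s, t)\<close> is a prime filter containing \<open>s \<setminus> t\<close>; pairs with
  \<open>s \<setminus> t = \<zero>\<close> are in the domain of no \<open>rep s\<close>.\<close>

definition point :: "'a \<times> 'a \<Rightarrow> 'a set" where
  "point p = (SOME V. prime_filter V \<and> fst p \<setminus> snd p \<in> V)"

definition rep :: "'a \<Rightarrow> (('a \<times> 'a) \<times> 'a) set" where
  "rep s = {(p, code (point p) s) | p. fst p \<setminus> snd p \<noteq> \<zero> \<and> s \<in> dom_at (point p)}"

lemma
  assumes "fst p \<setminus> snd p \<noteq> \<zero>"
  shows prime_filter_point: "prime_filter (point p)"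
    and diff_mem_point: "fst p \<setminus> snd p \<in> point p"
  using someI_ex[OF prime_filter_exists[OF assms]] unfolding point_def by blast+

lemma mem_rep_iff:
  "(p, y) \<in> rep s \<longleftrightarrow> fst p \<setminus> snd p \<noteq> \<zero> \<and> s \<in> dom_at (point p) \<and> y = code (point p) s"
  unfolding rep_def by blast

lemma rep_in_Par: "rep s \<in> Par UNIV UNIV"
  unfolding Par_def by (auto simp: mem_rep_iff)

lemma Domain_rep: "p \<in> Domain (rep s) \<longleftrightarrow> fst p \<setminus> snd p \<noteq> \<zero> \<and> s \<in> dom_at (point p)"
  by (simp add: Domain_iff mem_rep_iff)

lemma rep_join: "rep (s \<squnion> t) = override (rep s) (rep t)"
proof -
  have "(p, y) \<in> rep (s \<squnion> t) \<longleftrightarrow> (p, y) \<in> rep s \<or> (p, y) \<in> rep t \<and> p \<notin> Domain (rep s)"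
    for p y
  proof (cases "fst p \<setminus> snd p = \<zero>")
    case True
    then show ?thesis by (simp add: mem_rep_iff)
  next
    case False
    note V = prime_filter_point[OF False]
    show ?thesis
      using join_mem_dom_at_iff[OF V, of s t] code_join_if_mem[OF V, of s t]
        code_join_if_not_mem[OF V, of s t]
      by (auto simp: mem_rep_iff Domain_rep False)
  qed
  then show ?thesis unfolding override_def restr_minus_def by auto
qed

lemma rep_diff: "rep (s \<setminus> t) = pdiff (rep s) (rep t)"
proof -
  have "(p, y) \<in> rep (s \<setminus> t) \<longleftrightarrow> (p, y) \<in> rep s \<and> (p, y) \<notin> rep t" for p y
  proof (cases "fst p \<setminus> snd p = \<zero>")
    case True
    then show ?thesis by (simp add: mem_rep_iff)
  next
    case False
    note V = prime_filter_point[OF False]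
    show ?thesis
      using diff_mem_dom_at_iff[OF V, of s t] code_diff[OF V, of s t]
      by (auto simp: mem_rep_iff False)
  qed
  then show ?thesis unfolding pdiff_def by auto
qed

lemma rep_diff_nonempty:
  assumes "s \<setminus> t \<noteq> \<zero>"
  shows "rep (s \<setminus> t) \<noteq> {}"
proof -
  have "s \<setminus> t \<in> dom_at (point (s, t))"
    using prime_filter_point[of "(s, t)"] diff_mem_point[of "(s, t)"] assms mem_dom_at by simp
  then show ?thesis using assms mem_rep_iff[of "(s, t)"] by auto
qed

lemma inj_rep: "inj rep"
proof (rule injI)
  fix s t
  assume "rep s = rep t"
  then have "rep (s \<setminus> t) = {}" "rep (t \<setminus> s) = {}"
    by (simp_all add: rep_diff pdiff_def)
  then show "s = t" using rep_diff_nonempty eq_if_diffs_eq_zero by blast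
qed

theorem functional: "functional_in TYPE('a \<times> 'a) TYPE('a) (\<squnion>) (\<setminus>)"
  unfolding functional_in_def
proof (intro exI conjI)
  show "range rep \<subseteq> Par UNIV UNIV" using rep_in_Par by blast
  show "\<forall>f\<in>range rep. \<forall>g\<in>range rep. override f g \<in> range rep \<and> pdiff f g \<in> range rep"
    by (auto simp flip: rep_join rep_diff)
  show "bij_betw rep UNIV (range rep)" using inj_rep by (simp add: bij_betw_def)
qed (simp_all add: rep_join rep_diff)

end

theorem proposition5p2:
  fixes j d :: "'a \<Rightarrow> 'a \<Rightarrow> 'a"
  shows "(functional_in TYPE('x) TYPE('y) j d \<longrightarrow> od_algebra j d)
       \<and> (od_algebra j d \<longrightarrow> functional_in TYPE('a \<times> 'a) TYPE('a) j d)"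
proof (intro conjI impI)
  show "od_algebra j d" if "functional_in TYPE('x) TYPE('y) j d"
    using that by (rule od_algebra_if_functional)
  assume "od_algebra j d"
  then obtain z where "od_alg j d z"
    unfolding od_alg_def od_algebra_def by blast
  then show "functional_in TYPE('a \<times> 'a) TYPE('a) j d"
    by (rule od_alg.functional)
qed

end
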